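(* Assume $|\mathbb O|\ge2$. Let $\mathcal I\subseteq\mathcal V$ and consider the PID opinion dynamics with initial states satisfying $x_i(0)=\theta$ for all $i\in\mathcal I$. The following are equivalent: (1) the system almost surely converges to the consensus state $(\theta,\dots,\theta)$, regardless of the initial opinions $x_i(0)\in\mathbb O$ of the nodes $i\in\mathcal V\setminus\mathcal I$; (2) every non-empty strictly cohesive subset of $\mathcal V$ contains at least one node of $\mathcal I$.
   Context: Let $n\ge1$, $\mathcal V=\{1,\dots,n\}$, and let $W=(w_{ij})$ be an $n\times n$ row-stochastic matrix (nonnegative entries, each row summing to $1$). The opinion set is a finite set of consecutive integers $\mathbb O=\{k,\dots,k+s\}$, and $\theta\in\mathbb O$ is a fixed "truth". For $x\in\mathbb O^n$, $i\in\mathcal V$, $z\in\mathbb O$, define $C^i_{\mathrm{social}}(z;x)=\sum_{j=1}^n w_{ij}|z-x_j|$ and $C^i_{\mathrm{cog}}(z)=|z-\theta|$, and $P_i(x)=\{z\in\mathbb O: C^i_{\mathrm{social}}(z;x)\le C^i_{\mathrm{social}}(x_i;x),\ |z-\theta|\le |x_i-\theta|\}$. PID opinion dynamics: starting from $x(0)$, at each time $t+1$ a node $i$ is chosen uniformly at random from $\mathcal V$ and sets $x_i(t+1)$ to an element chosen at random from $P_i(x(t))$, each element having positive probability; all other nodes keep their opinions. A set $\mathcal M\subseteq\mathcal V$ is strictly cohesive if $\sum_{j\in\mathcal M}w_{ij}>\tfrac12$ for every $i\in\mathcal M$. *)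

theory Defs
  imports "HOL-Probability.Probability"
begin

text \<open>Nodes are 1..n; an opinion profile is a function nat => int (only the
values on 1..n matter). The opinion set is O = {k..k+s}.\<close>

type_synonym profile = "nat \<Rightarrow> int"

definition row_stochastic :: "nat \<Rightarrow> (nat \<Rightarrow> nat \<Rightarrow> real) \<Rightarrow> bool" where
  "row_stochastic n W \<longleftrightarrow>
     (\<forall>i\<in>{1..n}. \<forall>j\<in>{1..n}. W i j \<ge> 0) \<and>
     (\<forall>i\<in>{1..n}. (\<Sum>j=1..n. W i j) = 1)"

definition social_cost :: "nat \<Rightarrow> (nat \<Rightarrow> nat \<Rightarrow> real) \<Rightarrow> nat \<Rightarrow> int \<Rightarrow> profile \<Rightarrow> real" where
  "social_cost n W i z x = (\<Sum>j=1..n. W i j * real_of_int \<bar>z - x j\<bar>)"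

definition cog_cost :: "int \<Rightarrow> int \<Rightarrow> real" where
  "cog_cost \<theta> z = real_of_int \<bar>z - \<theta>\<bar>"

definition P_set :: "nat \<Rightarrow> (nat \<Rightarrow> nat \<Rightarrow> real) \<Rightarrow> int set \<Rightarrow> int \<Rightarrow> profile \<Rightarrow> nat \<Rightarrow> int set" where
  "P_set n W Opn \<theta> x i =
     {z \<in> Opn. social_cost n W i z x \<le> social_cost n W i (x i) x \<and> cog_cost \<theta> z \<le> cog_cost \<theta> (x i)}"

definition strictly_cohesive :: "nat \<Rightarrow> (nat \<Rightarrow> nat \<Rightarrow> real) \<Rightarrow> nat set \<Rightarrow> bool" where
  "strictly_cohesive n W M \<longleftrightarrow> M \<subseteq> {1..n} \<and> (\<forall>i\<in>M. (\<Sum>j\<in>M. W i j) > 1/2)"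

text \<open>A selection rule: for every profile with opinions in O and every node i,
a distribution on P_i(x) giving every element positive probability
(equivalently, with support exactly P_i(x), since P_i(x) is finite).\<close>
definition valid_selection ::
  "nat \<Rightarrow> (nat \<Rightarrow> nat \<Rightarrow> real) \<Rightarrow> int set \<Rightarrow> int \<Rightarrow> (profile \<Rightarrow> nat \<Rightarrow> int pmf) \<Rightarrow> bool" where
  "valid_selection n W Opn \<theta> q \<longleftrightarrow>
     (\<forall>x. (\<forall>j\<in>{1..n}. x j \<in> Opn) \<longrightarrow> (\<forall>i\<in>{1..n}. set_pmf (q x i) = P_set n W Opn \<theta> x i))"

definition pid_kernel :: "nat \<Rightarrow> (profile \<Rightarrow> nat \<Rightarrow> int pmf) \<Rightarrow> profile \<Rightarrow> profile pmf" where
  "pid_kernel n q x = bind_pmf (pmf_of_set {1..n}) (\<lambda>i. map_pmf (\<lambda>z. x(i := z)) (q x i))"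

definition markov_chain_process ::
  "'w measure \<Rightarrow> (nat \<Rightarrow> 'w \<Rightarrow> 's) \<Rightarrow> 's \<Rightarrow> ('s \<Rightarrow> 's pmf) \<Rightarrow> bool" where
  "markov_chain_process M X x0 K \<longleftrightarrow>
     prob_space M \<and>
     (\<forall>t. X t \<in> measurable M (count_space UNIV)) \<and>
     measure M {\<omega> \<in> space M. X 0 \<omega> = x0} = 1 \<and>
     (\<forall>t xs y. length xs = Suc t \<longrightarrow>
        measure M {\<omega> \<in> space M. \<forall>r\<le>Suc t. X r \<omega> = (xs @ [y]) ! r}
        = measure M {\<omega> \<in> space M. \<forall>r\<le>t. X r \<omega> = xs ! r} * pmf (K (last xs)) y)"

end

(*
  Restricted to the finite set of profiles with opinions in O and the truth on I,
  the PID chain has the consensus (theta, ..., theta) as an absorbing set, and from every other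
  profile some move strictly decreases the distance sum_j |x_j - theta|: the nodes holding the
  most extreme opinion on one side of theta form a set disjoint from I, hence not strictly
  cohesive, so one of them has at most half of its weight inside the set and can step one unit
  towards theta without increasing its social cost. Hence consensus is reached within a bounded
  number of steps with probability bounded away from zero, uniformly in the initial profile,
  and a geometric bound gives almost sure absorption.

  If a non-empty strictly cohesive S avoids I, put an opinion a other than theta on
  S and theta elsewhere. A strict weighted majority of each node of S agrees with it, so a is its
  unique social optimum, while nodes at theta cannot move cognitively. The profile is a fixed
  point of the dynamics, and the constant process is a PID chain that never reaches consensus.
*)

theory Submission
  imports Defs
begin

section \<open>Path distributions of a Markov kernel\<close>

primrec path_pmf :: "('s \<Rightarrow> 's pmf) \<Rightarrow> 's \<Rightarrow> nat \<Rightarrow> 's list pmf" where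
  "path_pmf K x 0 = return_pmf [x]"
| "path_pmf K x (Suc t) = bind_pmf (path_pmf K x t) (\<lambda>xs. map_pmf (\<lambda>y. xs @ [y]) (K (last xs)))"

lemma set_path_pmfD:
  assumes "xs \<in> set_pmf (path_pmf K x t)"
  shows "length xs = Suc t" "hd xs = x" "\<forall>r<t. xs ! Suc r \<in> set_pmf (K (xs ! r))"
proof -
  have "length xs = Suc t \<and> hd xs = x \<and> (\<forall>r<t. xs ! Suc r \<in> set_pmf (K (xs ! r)))"
    using assms
  proof (induction t arbitrary: xs)
    case 0
    then show ?case by simp
  next
    case (Suc t)
    then obtain ys y where ys: "ys \<in> set_pmf (path_pmf K x t)" and y: "y \<in> set_pmf (K (last ys))"
      and xs: "xs = ys @ [y]" by auto
    from Suc.IH[OF ys] have len: "length ys = Suc t" and hd: "hd ys = x"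
      and steps: "\<forall>r<t. ys ! Suc r \<in> set_pmf (K (ys ! r))" by auto
    have "last ys = ys ! t"
      using len by (metis last_conv_nth list.size(3) nat.distinct(1) diff_Suc_1)
    then have "\<forall>r<Suc t. xs ! Suc r \<in> set_pmf (K (xs ! r))"
      using steps y len by (auto simp: xs nth_append less_Suc_eq)
    with len hd show ?case
      by (cases ys) (auto simp: xs)
  qed
  then show "length xs = Suc t" "hd xs = x" "\<forall>r<t. xs ! Suc r \<in> set_pmf (K (xs ! r))"
    by auto
qed

lemma set_path_pmf_subset:
  assumes closed: "\<forall>y\<in>R. set_pmf (K y) \<subseteq> R" and "x \<in> R" and "xs \<in> set_pmf (path_pmf K x t)"
  shows "set xs \<subseteq> R"
  using assms(3)
proof (induction t arbitrary: xs)
  case 0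
  then show ?case using \<open>x \<in> R\<close> by simp
next
  case (Suc t)
  then obtain ys y where ys: "ys \<in> set_pmf (path_pmf K x t)" and y: "y \<in> set_pmf (K (last ys))"
    and xs: "xs = ys @ [y]" by auto
  have "last ys \<in> R"
    using Suc.IH[OF ys] set_path_pmfD(1)[OF ys] by (metis last_in_set length_0_conv nat.distinct(1) subsetD)
  with closed y Suc.IH[OF ys] show ?case
    by (auto simp: xs)
qed

lemma pmf_path_pmf_snoc:
  "pmf (path_pmf K x (Suc t)) (xs @ [y]) = pmf (path_pmf K x t) xs * pmf (K (last xs)) y"
proof -
  have "pmf (path_pmf K x (Suc t)) (xs @ [y]) =
      measure_pmf.expectation (path_pmf K x t) (\<lambda>ys. if ys = xs then pmf (K (last xs)) y else 0)"
    unfolding path_pmf.simps pmf_bind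
  proof (rule Bochner_Integration.integral_cong[OF refl])
    fix ys
    have "(\<lambda>z. ys @ [z]) -` {xs @ [y]} = (if ys = xs then {y} else {})"
      by auto
    then show "pmf (map_pmf (\<lambda>z. ys @ [z]) (K (last ys))) (xs @ [y]) =
        (if ys = xs then pmf (K (last xs)) y else 0)"
      by (simp add: pmf_map measure_pmf_single)
  qed
  also have "\<dots> = pmf (path_pmf K x t) xs * pmf (K (last xs)) y"
    by (subst integral_measure_pmf[where A="{xs}"]) (auto split: if_splits)
  finally show ?thesis .
qed

text \<open>Markov property: a path of length \<open>t + L\<close> continues a path of length \<open>t\<close> by a path
  started in its last state, whose first entry (that state again) is dropped by \<open>tl\<close>.\<close>

lemma path_pmf_add:
  "path_pmf K x (t + L) =
     bind_pmf (path_pmf K x t) (\<lambda>xs. map_pmf (\<lambda>ys. xs @ tl ys) (path_pmf K (last xs) L))"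
proof (induction L)
  case 0
  show ?case by (simp add: bind_return_pmf')
next
  case (Suc L)
  have "path_pmf K x (t + Suc L) = bind_pmf (path_pmf K x t) (\<lambda>xs.
      bind_pmf (map_pmf (\<lambda>ys. xs @ tl ys) (path_pmf K (last xs) L))
        (\<lambda>ys. map_pmf (\<lambda>y. ys @ [y]) (K (last ys))))"
    by (simp add: Suc bind_assoc_pmf)
  also have "\<dots> = bind_pmf (path_pmf K x t) (\<lambda>xs. map_pmf (\<lambda>ys. xs @ tl ys) (path_pmf K (last xs) (Suc L)))"
  proof (rule bind_pmf_cong[OF refl])
    fix xs
    show "bind_pmf (map_pmf (\<lambda>ys. xs @ tl ys) (path_pmf K (last xs) L))
        (\<lambda>ys. map_pmf (\<lambda>y. ys @ [y]) (K (last ys))) =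
      map_pmf (\<lambda>ys. xs @ tl ys) (path_pmf K (last xs) (Suc L))"
      unfolding bind_map_pmf path_pmf.simps map_bind_pmf map_pmf_comp
    proof (rule bind_pmf_cong[OF refl])
      fix ys
      assume "ys \<in> set_pmf (path_pmf K (last xs) L)"
      then have "ys = last xs # tl ys"
        using set_path_pmfD(1,2) by (cases ys) fastforce+
      then have "last (xs @ tl ys) = last ys" and "\<And>y. tl (ys @ [y]) = tl ys @ [y]"
        by (cases ys; simp)+
      then show "map_pmf (\<lambda>y. (xs @ tl ys) @ [y]) (K (last (xs @ tl ys))) =
          map_pmf (\<lambda>y. xs @ tl (ys @ [y])) (K (last ys))"
        by simp
    qed
  qed
  finally show ?case .
qed

lemma Cons_in_set_path_pmf:
  assumes "y \<in> set_pmf (K x)" and ys: "ys \<in> set_pmf (path_pmf K y L)"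
  shows "x # ys \<in> set_pmf (path_pmf K x (Suc L))"
proof -
  have "[x, y] \<in> set_pmf (path_pmf K x 1)"
    using assms(1) by simp
  moreover have "x # ys = [x, y] @ tl ys"
    using set_path_pmfD(1,2)[OF ys] by (cases ys) auto
  ultimately show ?thesis
    using path_pmf_add[of K x 1 L] ys by force
qed

definition avoiding :: "'s set \<Rightarrow> 's list set" where
  "avoiding C = {xs. set xs \<inter> C = {}}"

lemma ex_path_pmf_not_avoiding:
  assumes closed: "\<forall>y\<in>R. set_pmf (K y) \<subseteq> R"
    and descent: "\<forall>y\<in>R - C. \<exists>z\<in>set_pmf (K y). V z < (V y :: nat)"
    and "x \<in> R" and "V x \<le> L"
  shows "\<exists>xs\<in>set_pmf (path_pmf K x L). xs \<notin> avoiding C"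
  using assms(3,4)
proof (induction "V x" arbitrary: x L rule: less_induct)
  case (less x)
  show ?case
  proof (cases "x \<in> C")
    case True
    obtain xs where xs: "xs \<in> set_pmf (path_pmf K x L)"
      using set_pmf_not_empty by fast
    then have "x \<in> set xs"
      using set_path_pmfD(1,2)[OF xs] by (cases xs) auto
    with xs True show ?thesis
      unfolding avoiding_def by blast
  next
    case False
    with descent less.prems obtain y where y: "y \<in> set_pmf (K x)" "V y < V x"
      by blast
    with less.prems obtain L' where L: "L = Suc L'" "V y \<le> L'"
      by (cases L) auto
    have "y \<in> R"
      using closed less.prems(1) y(1) by blast
    then obtain ys where ys: "ys \<in> set_pmf (path_pmf K y L')" "ys \<notin> avoiding C"
      using less.hyps[OF y(2)] L(2) by blast
    have "x # ys \<in> set_pmf (path_pmf K x L)"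
      using Cons_in_set_path_pmf[OF y(1) ys(1)] L(1) by simp
    moreover have "x # ys \<notin> avoiding C"
      using ys(2) unfolding avoiding_def by auto
    ultimately show ?thesis
      by blast
  qed
qed

lemma path_pmf_avoiding_uniform_bound:
  assumes "finite R" and closed: "\<forall>y\<in>R. set_pmf (K y) \<subseteq> R"
    and descent: "\<forall>y\<in>R - C. \<exists>z\<in>set_pmf (K y). V z < (V y :: nat)"
  obtains L c where "0 \<le> c" "c < 1"
    "\<forall>x\<in>R. measure_pmf.prob (path_pmf K x L) (avoiding C) \<le> c"
proof -
  define L where "L = Max (V ` R)"
  define c where "c = Max (insert 0 ((\<lambda>x. measure_pmf.prob (path_pmf K x L) (avoiding C)) ` R))"
  have "measure_pmf.prob (path_pmf K x L) (avoiding C) < 1" if x: "x \<in> R" for x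
  proof -
    obtain xs where "xs \<in> set_pmf (path_pmf K x L)" "xs \<notin> avoiding C"
      using ex_path_pmf_not_avoiding[OF closed descent x, of L] \<open>finite R\<close> x
      unfolding L_def by auto
    then have "measure_pmf.prob (path_pmf K x L) (- avoiding C) > 0"
      by (intro measure_pmf_posI) auto
    then show ?thesis
      by (simp add: measure_pmf.prob_compl[of "- avoiding C", simplified] Compl_eq_Diff_UNIV)
  qed
  then have "c < 1"
    unfolding c_def using \<open>finite R\<close> by (subst Max_less_iff) auto
  moreover have "0 \<le> c"
    unfolding c_def using \<open>finite R\<close> by simp
  moreover have "\<forall>x\<in>R. measure_pmf.prob (path_pmf K x L) (avoiding C) \<le> c"
    unfolding c_def using \<open>finite R\<close> by simp
  ultimately show ?thesis
    using that by blast
qed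

lemma append_tl_avoiding_iff:
  assumes "xs \<noteq> []" and "ys = last xs # tl ys"
  shows "xs @ tl ys \<in> avoiding C \<longleftrightarrow> xs \<in> avoiding C \<and> ys \<in> avoiding C"
proof -
  have "set ys = insert (last xs) (set (tl ys))"
    by (subst assms(2)) simp
  with last_in_set[OF assms(1)] show ?thesis
    unfolding avoiding_def by auto
qed

lemma emeasure_path_pmf_avoiding_add:
  assumes closed: "\<forall>y\<in>R. set_pmf (K y) \<subseteq> R" and "x \<in> R"
    and bound: "\<forall>y\<in>R. emeasure (path_pmf K y L) (avoiding C) \<le> c"
  shows "emeasure (path_pmf K x (t + L)) (avoiding C) \<le> c * emeasure (path_pmf K x t) (avoiding C)"
proof -
  have "emeasure (path_pmf K x (t + L)) (avoiding C) =
      (\<integral>\<^sup>+xs. emeasure (path_pmf K (last xs) L) ((\<lambda>ys. xs @ tl ys) -` avoiding C) \<partial>path_pmf K x t)"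
    by (simp add: path_pmf_add)
  also have "\<dots> \<le> (\<integral>\<^sup>+xs. c * indicator (avoiding C) xs \<partial>path_pmf K x t)"
  proof (rule nn_integral_mono_AE, unfold AE_measure_pmf_iff, intro ballI)
    fix xs
    assume xs: "xs \<in> set_pmf (path_pmf K x t)"
    have "xs \<noteq> []"
      using set_path_pmfD(1)[OF xs] by auto
    then have "last xs \<in> R"
      using set_path_pmf_subset[OF closed \<open>x \<in> R\<close> xs] by auto
    have "(\<lambda>ys. xs @ tl ys) -` avoiding C \<inter> set_pmf (path_pmf K (last xs) L) =
        (if xs \<in> avoiding C then avoiding C else {}) \<inter> set_pmf (path_pmf K (last xs) L)"
    proof -
      have "ys = last xs # tl ys" if "ys \<in> set_pmf (path_pmf K (last xs) L)" for ys
        using set_path_pmfD(1,2)[OF that] by (cases ys) auto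
      then show ?thesis
        using append_tl_avoiding_iff[OF \<open>xs \<noteq> []\<close>] by auto
    qed
    then have "emeasure (path_pmf K (last xs) L) ((\<lambda>ys. xs @ tl ys) -` avoiding C) =
        emeasure (path_pmf K (last xs) L) (if xs \<in> avoiding C then avoiding C else {})"
      by (metis emeasure_Int_set_pmf)
    also have "\<dots> \<le> c * indicator (avoiding C) xs"
      using bound \<open>last xs \<in> R\<close> by (simp add: indicator_def)
    finally show "emeasure (path_pmf K (last xs) L) ((\<lambda>ys. xs @ tl ys) -` avoiding C) \<le>
        c * indicator (avoiding C) xs" .
  qed
  also have "\<dots> = c * emeasure (path_pmf K x t) (avoiding C)"
    by (simp add: nn_integral_cmult_indicator)
  finally show ?thesis .
qed

lemma emeasure_path_pmf_avoiding_power: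
  assumes closed: "\<forall>y\<in>R. set_pmf (K y) \<subseteq> R" and "x \<in> R" and "0 \<le> c"
    and bound: "\<forall>y\<in>R. measure_pmf.prob (path_pmf K y L) (avoiding C) \<le> c"
  shows "emeasure (path_pmf K x (m * L)) (avoiding C) \<le> ennreal (c ^ m)"
proof (induction m)
  case 0
  show ?case by (simp add: indicator_def)
next
  case (Suc m)
  have "\<forall>y\<in>R. emeasure (path_pmf K y L) (avoiding C) \<le> ennreal c"
    using bound by (simp add: measure_pmf.emeasure_eq_measure ennreal_leI)
  then have "emeasure (path_pmf K x (m * L + L)) (avoiding C) \<le>
      ennreal c * emeasure (path_pmf K x (m * L)) (avoiding C)"
    by (rule emeasure_path_pmf_avoiding_add[OF closed \<open>x \<in> R\<close>])
  also have "\<dots> \<le> ennreal c * ennreal (c ^ m)"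
    by (rule mult_left_mono[OF Suc.IH]) simp
  finally show ?case
    using \<open>0 \<le> c\<close> by (simp add: add.commute ennreal_mult'[symmetric])
qed

section \<open>Absorption of finite-state Markov chains\<close>

definition trajectory :: "(nat \<Rightarrow> 'w \<Rightarrow> 's) \<Rightarrow> nat \<Rightarrow> 'w \<Rightarrow> 's list" where
  "trajectory X t \<omega> = map (\<lambda>r. X r \<omega>) [0..<Suc t]"

lemma length_trajectory [simp]: "length (trajectory X t \<omega>) = Suc t"
  by (simp add: trajectory_def)

lemma nth_trajectory [simp]: "r \<le> t \<Longrightarrow> trajectory X t \<omega> ! r = X r \<omega>"
  unfolding trajectory_def by (simp del: upt_Suc)

lemma trajectory_eq_iff:
  "length xs = Suc t \<Longrightarrow> trajectory X t \<omega> = xs \<longleftrightarrow> (\<forall>r\<in>{..t}. X r \<omega> = xs ! r)"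
  by (auto simp: list_eq_iff_nth_eq less_Suc_eq_le)

lemma trajectory_in_avoiding_iff:
  "trajectory X t \<omega> \<in> avoiding C \<longleftrightarrow> (\<forall>r\<in>{..t}. X r \<omega> \<notin> C)"
  unfolding trajectory_def avoiding_def by (auto simp del: upt_Suc simp: atLeast0LessThan lessThan_Suc_atMost)

lemma markov_chain_process_stationary:
  assumes "prob_space M" and "K x0 = return_pmf x0"
  shows "markov_chain_process M (\<lambda>_ _. x0) x0 K"
proof -
  have event: "measure M {\<omega> \<in> space M. P} = (if P then 1 else 0)" for P
    using prob_space.prob_space[OF assms(1)] by simp
  have "measure M {\<omega> \<in> space M. \<forall>r\<le>Suc t. x0 = (xs @ [y]) ! r}
      = measure M {\<omega> \<in> space M. \<forall>r\<le>t. x0 = xs ! r} * pmf (K (last xs)) y"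
    if len: "length xs = Suc t" for t xs y
  proof -
    have "(\<forall>r\<le>Suc t. x0 = (xs @ [y]) ! r) \<longleftrightarrow> (\<forall>r\<le>t. x0 = xs ! r) \<and> y = x0"
      using len by (auto simp: nth_append le_Suc_eq)
    moreover have "last xs = x0" if "\<forall>r\<le>t. x0 = xs ! r"
      using that len by (metis last_conv_nth diff_Suc_1 le_refl list.size(3) nat.distinct(1))
    ultimately show ?thesis
      by (auto simp: event assms(2))
  qed
  then show ?thesis
    unfolding markov_chain_process_def using assms(1) prob_space.prob_space[OF assms(1)]
    by (simp add: event)
qed

locale markov_chain =
  fixes M :: "'w measure" and X :: "nat \<Rightarrow> 'w \<Rightarrow> 's" and x0 :: 's and K :: "'s \<Rightarrow> 's pmf"
  assumes markov_chain_process: "markov_chain_process M X x0 K"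
begin

sublocale prob_space M
  using markov_chain_process by (simp add: markov_chain_process_def)

lemma sets_Collect_state: "{\<omega> \<in> space M. P (X t \<omega>)} \<in> sets M"
  using markov_chain_process unfolding markov_chain_process_def
  by (auto intro: measurable_sets_Collect)

lemma sets_trajectory_eq: "{\<omega> \<in> space M. trajectory X t \<omega> = xs} \<in> sets M"
proof (cases "length xs = Suc t")
  case True
  then show ?thesis
    by (simp add: trajectory_eq_iff) (intro sets.sets_Collect_finite_All sets_Collect_state finite_atMost)
next
  case False
  then have "{\<omega> \<in> space M. trajectory X t \<omega> = xs} = {}"
    by (metis (mono_tags, lifting) Collect_empty_eq length_trajectory)
  then show ?thesis
    by (simp only: sets.empty_sets)
qed

lemma sets_trajectory_in_countable:
  assumes "countable B"
  shows "{\<omega> \<in> space M. trajectory X t \<omega> \<in> B} \<in> sets M"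
proof -
  have "{\<omega> \<in> space M. trajectory X t \<omega> \<in> B} = (\<Union>xs\<in>B. {\<omega> \<in> space M. trajectory X t \<omega> = xs})"
    by auto
  then show ?thesis
    using assms by (auto intro!: sets.countable_UN' sets_trajectory_eq)
qed

lemma prob_trajectory_0_eq: "prob {\<omega> \<in> space M. trajectory X 0 \<omega> = xs} = pmf (path_pmf K x0 0) xs"
proof -
  have start: "prob {\<omega> \<in> space M. X 0 \<omega> = x0} = 1"
    using markov_chain_process unfolding markov_chain_process_def by simp
  show ?thesis
  proof (cases "xs = [x0]")
    case True
    then show ?thesis
      using start by (simp add: trajectory_def)
  next
    case False
    have "{\<omega> \<in> space M. trajectory X 0 \<omega> = xs} \<subseteq> space M - {\<omega> \<in> space M. X 0 \<omega> = x0}"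
      using False by (auto simp: trajectory_def)
    then have "prob {\<omega> \<in> space M. trajectory X 0 \<omega> = xs} \<le> prob (space M - {\<omega> \<in> space M. X 0 \<omega> = x0})"
      by (intro finite_measure_mono sets.Diff sets_Collect_state) auto
    also have "\<dots> = 0"
      using prob_compl[OF sets_Collect_state, of "\<lambda>s. s = x0" 0] start by simp
    finally show ?thesis
      using False by (simp add: measure_le_0_iff)
  qed
qed

lemma prob_trajectory_eq: "prob {\<omega> \<in> space M. trajectory X t \<omega> = xs} = pmf (path_pmf K x0 t) xs"
proof (induction t arbitrary: xs)
  case 0
  show ?case
    by (rule prob_trajectory_0_eq)
next
  case (Suc t)
  show ?case
  proof (cases "length xs = Suc (Suc t)")
    case True
    then obtain ys y where xs: "xs = ys @ [y]" and len: "length ys = Suc t"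
      by (metis append_butlast_last_id diff_Suc_1 length_butlast list.size(3) nat.distinct(1))
    have "prob {\<omega> \<in> space M. trajectory X (Suc t) \<omega> = xs} =
        prob {\<omega> \<in> space M. \<forall>r\<le>Suc t. X r \<omega> = xs ! r}"
      using True by (simp add: trajectory_eq_iff Ball_def)
    also have "\<dots> = prob {\<omega> \<in> space M. \<forall>r\<le>t. X r \<omega> = ys ! r} * pmf (K (last ys)) y"
      using markov_chain_process len unfolding markov_chain_process_def xs by blast
    also have "prob {\<omega> \<in> space M. \<forall>r\<le>t. X r \<omega> = ys ! r} = pmf (path_pmf K x0 t) ys"
      using Suc.IH[of ys] len by (simp add: trajectory_eq_iff Ball_def)
    finally show ?thesis
      by (simp only: xs pmf_path_pmf_snoc)
  next
    case False
    then have "{\<omega> \<in> space M. trajectory X (Suc t) \<omega> = xs} = {}"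
      by (metis (mono_tags, lifting) Collect_empty_eq length_trajectory)
    moreover have "xs \<notin> set_pmf (path_pmf K x0 (Suc t))"
      using False by (metis set_path_pmfD(1))
    ultimately show ?thesis
      by (simp only: measure_empty set_pmf_iff not_not)
  qed
qed

lemma emeasure_trajectory_in_countable:
  assumes "countable B"
  shows "emeasure M {\<omega> \<in> space M. trajectory X t \<omega> \<in> B} = emeasure (path_pmf K x0 t) B"
proof -
  have "{\<omega> \<in> space M. trajectory X t \<omega> \<in> B} = (\<Union>xs\<in>B. {\<omega> \<in> space M. trajectory X t \<omega> = xs})"
    by auto
  also have "emeasure M \<dots> = (\<integral>\<^sup>+xs. emeasure M {\<omega> \<in> space M. trajectory X t \<omega> = xs} \<partial>count_space B)"
    using assms by (intro emeasure_UN_countable sets_trajectory_eq) (auto simp: disjoint_family_on_def)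
  also have "\<dots> = (\<integral>\<^sup>+xs. pmf (path_pmf K x0 t) xs \<partial>count_space B)"
    by (simp add: emeasure_eq_measure prob_trajectory_eq)
  also have "\<dots> = emeasure (path_pmf K x0 t) B"
    by (rule nn_integral_pmf)
  finally show ?thesis .
qed

lemma AE_trajectory_in_support: "AE \<omega> in M. trajectory X t \<omega> \<in> set_pmf (path_pmf K x0 t)"
proof -
  let ?S = "set_pmf (path_pmf K x0 t)"
  have "emeasure M {\<omega> \<in> space M. trajectory X t \<omega> \<in> ?S} = 1"
    by (simp add: emeasure_trajectory_in_countable measure_pmf.emeasure_eq_1_AE AE_measure_pmf)
  then have "prob {\<omega> \<in> space M. trajectory X t \<omega> \<in> ?S} = 1"
    by (simp add: measure_def)
  then show ?thesis
    by (auto dest: AE_prob_1)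
qed

lemma emeasure_trajectory_in:
  assumes "{\<omega> \<in> space M. trajectory X t \<omega> \<in> A} \<in> sets M"
  shows "emeasure M {\<omega> \<in> space M. trajectory X t \<omega> \<in> A} = emeasure (path_pmf K x0 t) A"
proof -
  let ?S = "set_pmf (path_pmf K x0 t)"
  have "AE \<omega> in M. trajectory X t \<omega> \<in> A \<longleftrightarrow> trajectory X t \<omega> \<in> A \<inter> ?S"
    using AE_trajectory_in_support[of t] by eventually_elim auto
  then have "emeasure M {\<omega> \<in> space M. trajectory X t \<omega> \<in> A} =
      emeasure M {\<omega> \<in> space M. trajectory X t \<omega> \<in> A \<inter> ?S}"
    by (intro emeasure_eq_AE assms sets_trajectory_in_countable countable_Int2) auto
  also have "\<dots> = emeasure (path_pmf K x0 t) (A \<inter> ?S)"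
    by (rule emeasure_trajectory_in_countable) (simp add: countable_Int2)
  also have "\<dots> = emeasure (path_pmf K x0 t) A"
    by (rule emeasure_Int_set_pmf)
  finally show ?thesis .
qed

lemma AE_follows_kernel: "AE \<omega> in M. X 0 \<omega> = x0 \<and> (\<forall>t. X (Suc t) \<omega> \<in> set_pmf (K (X t \<omega>)))"
proof -
  have "AE \<omega> in M. \<forall>t. trajectory X t \<omega> \<in> set_pmf (path_pmf K x0 t)"
    by (simp add: AE_all_countable AE_trajectory_in_support)
  then show ?thesis
  proof eventually_elim
    case (elim \<omega>)
    have "X 0 \<omega> = x0"
      using set_path_pmfD(2)[OF elim[rule_format, of 0]] by (simp add: trajectory_def)
    moreover have "X (Suc t) \<omega> \<in> set_pmf (K (X t \<omega>))" for t
      using set_path_pmfD(3)[OF elim[rule_format, of "Suc t"]] by simp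
    ultimately show ?case
      by blast
  qed
qed

text \<open>From every state of \<open>R\<close> the descent reaches \<open>C\<close> within \<open>L\<close> steps with probability
  at least \<open>1 - c > 0\<close>, so avoiding \<open>C\<close> for \<open>m * L\<close> steps has probability at most \<open>c ^ m\<close>.\<close>

lemma AE_hits:
  assumes "finite R" and closed: "\<forall>x\<in>R. set_pmf (K x) \<subseteq> R" and "x0 \<in> R"
    and descent: "\<forall>x\<in>R - C. \<exists>y\<in>set_pmf (K x). V y < (V x :: nat)"
  shows "AE \<omega> in M. \<exists>t. X t \<omega> \<in> C"
proof -
  obtain L c where c: "0 \<le> c" "c < 1"
    and bound: "\<forall>x\<in>R. measure_pmf.prob (path_pmf K x L) (avoiding C) \<le> c"
    using path_pmf_avoiding_uniform_bound[OF \<open>finite R\<close> closed descent] by blast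
  define Z where "Z = {\<omega> \<in> space M. \<forall>t. X t \<omega> \<notin> C}"
  have Z: "Z \<in> sets M"
    unfolding Z_def by (intro sets.sets_Collect_countable_All sets_Collect_state)
  have "prob Z \<le> c ^ m" for m
  proof -
    let ?A = "{\<omega> \<in> space M. trajectory X (m * L) \<omega> \<in> avoiding C}"
    have A: "?A \<in> sets M"
      unfolding trajectory_in_avoiding_iff by (intro sets.sets_Collect_finite_All sets_Collect_state) auto
    have "emeasure M Z \<le> emeasure M ?A"
      using A by (intro emeasure_mono) (auto simp: Z_def trajectory_in_avoiding_iff)
    also have "\<dots> = emeasure (path_pmf K x0 (m * L)) (avoiding C)"
      by (rule emeasure_trajectory_in[OF A])
    also have "\<dots> \<le> ennreal (c ^ m)"
      by (rule emeasure_path_pmf_avoiding_power[OF closed \<open>x0 \<in> R\<close> c(1) bound])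
    finally show ?thesis
      using c(1) by (simp add: emeasure_eq_measure)
  qed
  then have "prob Z = 0"
    using c real_arch_pow_inv[of "prob Z" c] by (metis measure_nonneg not_le order.not_eq_order_implies_strict)
  moreover have "{\<omega> \<in> space M. \<not> (\<exists>t. X t \<omega> \<in> C)} = Z"
    by (auto simp: Z_def)
  ultimately show ?thesis
    using Z by (simp add: AE_iff_measurable emeasure_eq_measure)
qed

lemma AE_eventually_absorbed:
  assumes "finite R" and closed: "\<forall>x\<in>R. set_pmf (K x) \<subseteq> R" and "x0 \<in> R"
    and absorbing: "\<forall>x\<in>R \<inter> C. set_pmf (K x) \<subseteq> C"
    and descent: "\<forall>x\<in>R - C. \<exists>y\<in>set_pmf (K x). V y < (V x :: nat)"
  shows "AE \<omega> in M. \<exists>T. \<forall>t\<ge>T. X t \<omega> \<in> C"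
  using AE_follows_kernel AE_hits[OF \<open>finite R\<close> closed \<open>x0 \<in> R\<close> descent]
proof eventually_elim
  case (elim \<omega>)
  then obtain T where T: "X T \<omega> \<in> C"
    by blast
  have R: "X t \<omega> \<in> R" for t
    by (induction t) (use elim closed \<open>x0 \<in> R\<close> in auto)
  have "X (T + d) \<omega> \<in> C" for d
    by (induction d) (use T R elim absorbing in auto)
  then have "\<forall>t\<ge>T. X t \<omega> \<in> C"
    by (metis le_add_diff_inverse)
  then show ?case
    by blast
qed

end

section \<open>PID opinion dynamics\<close>

lemma mem_P_set_iff:
  "z \<in> P_set n W Opn \<theta> x i \<longleftrightarrow>
     z \<in> Opn \<and> social_cost n W i z x \<le> social_cost n W i (x i) x \<and> \<bar>z - \<theta>\<bar> \<le> \<bar>x i - \<theta>\<bar>"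
  by (simp add: P_set_def cog_cost_def del: of_int_abs)

lemma set_pid_kernel:
  assumes "n \<ge> 1"
  shows "set_pmf (pid_kernel n q x) = (\<Union>i\<in>{1..n}. (\<lambda>z. x(i := z)) ` set_pmf (q x i))"
  using assms by (simp add: pid_kernel_def set_pmf_of_set)

lemma set_pid_kernelE:
  assumes "n \<ge> 1" and valid: "valid_selection n W Opn \<theta> q" and "\<forall>j\<in>{1..n}. x j \<in> Opn"
    and "y \<in> set_pmf (pid_kernel n q x)"
  obtains i z where "i \<in> {1..n}" "z \<in> P_set n W Opn \<theta> x i" "y = x(i := z)"
  using assms by (auto simp: set_pid_kernel valid_selection_def)

lemma pid_kernel_eq_return_pmf:
  assumes "n \<ge> 1" and "\<forall>i\<in>{1..n}. set_pmf (q x i) \<subseteq> {x i}"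
  shows "pid_kernel n q x = return_pmf x"
proof -
  have "pid_kernel n q x = bind_pmf (pmf_of_set {1..n}) (\<lambda>_. return_pmf x)"
    unfolding pid_kernel_def
  proof (rule bind_pmf_cong[OF refl])
    fix i
    assume "i \<in> set_pmf (pmf_of_set {1..n})"
    then have "set_pmf (q x i) \<subseteq> {x i}"
      using assms by (simp add: set_pmf_of_set)
    then show "map_pmf (\<lambda>z. x(i := z)) (q x i) = return_pmf x"
      by (simp add: set_pmf_subset_singleton)
  qed
  then show ?thesis
    by simp
qed

lemma social_cost_diff:
  "social_cost n W i z x - social_cost n W i a x =
     (\<Sum>j=1..n. W i j * real_of_int (\<bar>z - x j\<bar> - \<bar>a - x j\<bar>))"
  by (simp add: social_cost_def sum_subtractf right_diff_distrib del: of_int_abs)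

lemma social_cost_uminus: "social_cost n W i (- z) (\<lambda>j. - x j) = social_cost n W i z x"
  by (simp add: social_cost_def abs_minus_commute)

lemma sum_weighted_sign:
  assumes "row_stochastic n W" and "i \<in> {1..n}" and "S \<subseteq> {1..n}"
  shows "(\<Sum>j=1..n. W i j * (if j \<in> S then d else - d)) = d * (2 * (\<Sum>j\<in>S. W i j) - 1)"
proof -
  have "(\<Sum>j=1..n. W i j * (if j \<in> S then d else - d)) =
      (\<Sum>j=1..n. 2 * d * (if j \<in> S then W i j else 0) - d * W i j)"
    by (intro sum.cong) auto
  also have "\<dots> = 2 * d * (\<Sum>j=1..n. if j \<in> S then W i j else 0) - d * (\<Sum>j=1..n. W i j)"
    by (simp add: sum_subtractf sum_distrib_left)
  also have "(\<Sum>j=1..n. if j \<in> S then W i j else 0) = (\<Sum>j\<in>S. W i j)"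
    using sum.inter_restrict[of "{1..n}" "W i" S] assms(3) by (simp add: Int_absorb1)
  also have "(\<Sum>j=1..n. W i j) = 1"
    using assms(1,2) by (simp add: row_stochastic_def)
  finally show ?thesis
    by (simp add: algebra_simps)
qed

lemma social_cost_step_down_from_max:
  assumes "row_stochastic n W" and "i \<in> {1..n}" and max: "\<forall>j\<in>{1..n}. x j \<le> m"
    and minority: "(\<Sum>j\<in>{j\<in>{1..n}. x j = m}. W i j) \<le> 1/2"
  shows "social_cost n W i (m - 1) x \<le> social_cost n W i m x"
proof -
  let ?T = "{j\<in>{1..n}. x j = m}"
  have "\<bar>m - 1 - x j\<bar> - \<bar>m - x j\<bar> = (if j \<in> ?T then 1 else - 1)" if "j \<in> {1..n}" for j
    using max[rule_format, OF that] that by auto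
  then have "social_cost n W i (m - 1) x - social_cost n W i m x =
      (\<Sum>j=1..n. W i j * (if j \<in> ?T then 1 else - 1))"
    unfolding social_cost_diff by (intro sum.cong) auto
  also have "\<dots> = 2 * (\<Sum>j\<in>?T. W i j) - 1"
    using assms(1,2) by (subst sum_weighted_sign) auto
  finally show ?thesis
    using minority by simp
qed

lemma social_cost_less_at_majority_value:
  assumes rs: "row_stochastic n W" and "i \<in> {1..n}" and "S \<subseteq> {1..n}"
    and majority: "(\<Sum>j\<in>S. W i j) > 1/2" and "\<forall>j\<in>S. x j = a" and "z \<noteq> a"
  shows "social_cost n W i a x < social_cost n W i z x"
proof -
  define d where "d = real_of_int \<bar>z - a\<bar>"
  have "(\<Sum>j=1..n. W i j * (if j \<in> S then d else - d)) \<le>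
      (\<Sum>j=1..n. W i j * real_of_int (\<bar>z - x j\<bar> - \<bar>a - x j\<bar>))"
  proof (rule sum_mono)
    fix j
    assume "j \<in> {1..n}"
    then have "W i j \<ge> 0"
      using rs \<open>i \<in> {1..n}\<close> by (simp add: row_stochastic_def)
    moreover have "(if j \<in> S then d else - d) \<le> real_of_int (\<bar>z - x j\<bar> - \<bar>a - x j\<bar>)"
      using \<open>\<forall>j\<in>S. x j = a\<close> unfolding d_def by auto
    ultimately show "W i j * (if j \<in> S then d else - d) \<le> W i j * real_of_int (\<bar>z - x j\<bar> - \<bar>a - x j\<bar>)"
      by (rule mult_left_mono[rotated])
  qed
  then have "d * (2 * (\<Sum>j\<in>S. W i j) - 1) \<le> social_cost n W i z x - social_cost n W i a x"
    by (simp only: social_cost_diff sum_weighted_sign[OF assms(1-3)])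
  moreover have "d \<ge> 1"
    using \<open>z \<noteq> a\<close> unfolding d_def by linarith
  then have "0 < d * (2 * (\<Sum>j\<in>S. W i j) - 1)"
    using majority by (intro mult_pos_pos) auto
  ultimately show ?thesis
    by linarith
qed

lemma P_set_uminus:
  "- z \<in> P_set n W {- b..- a} (- \<theta>) (\<lambda>j. - x j) i \<longleftrightarrow> z \<in> P_set n W {a..b} \<theta> x i"
  unfolding mem_P_set_iff social_cost_uminus by (auto simp: abs_minus_commute)

lemma exists_node_with_minority_level:
  assumes cohesion: "\<forall>S. S \<noteq> {} \<longrightarrow> strictly_cohesive n W S \<longrightarrow> S \<inter> I \<noteq> {}"
    and "\<forall>j\<in>I. x j = \<theta>" and "m \<noteq> \<theta>" and "j \<in> {1..n}" and "x j = m"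
  obtains i where "i \<in> {1..n}" "x i = m" "(\<Sum>j\<in>{j\<in>{1..n}. x j = m}. W i j) \<le> 1/2"
proof -
  let ?T = "{j\<in>{1..n}. x j = m}"
  have "?T \<noteq> {}" and "?T \<inter> I = {}"
    using assms(2-5) by auto
  then have "\<not> strictly_cohesive n W ?T"
    using cohesion by blast
  then show ?thesis
    using that by (force simp: strictly_cohesive_def not_less)
qed

lemma exists_improving_move_from_above:
  assumes rs: "row_stochastic n W"
    and cohesion: "\<forall>S. S \<noteq> {} \<longrightarrow> strictly_cohesive n W S \<longrightarrow> S \<inter> I \<noteq> {}"
    and "\<theta> \<in> {a..b}" and xO: "\<forall>j\<in>{1..n}. x j \<in> {a..b}" and xI: "\<forall>j\<in>I. x j = \<theta>"
    and "j0 \<in> {1..n}" and "\<theta> < x j0"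
  shows "\<exists>i\<in>{1..n}. \<exists>z\<in>P_set n W {a..b} \<theta> x i. \<bar>z - \<theta>\<bar> < \<bar>x i - \<theta>\<bar>"
proof -
  define m where "m = Max (x ` {1..n})"
  have max: "\<forall>j\<in>{1..n}. x j \<le> m" and "m \<in> x ` {1..n}"
    unfolding m_def using \<open>j0 \<in> {1..n}\<close> by auto
  then obtain jm where "jm \<in> {1..n}" "x jm = m"
    by blast
  have "\<theta> < m"
    using \<open>j0 \<in> {1..n}\<close> \<open>\<theta> < x j0\<close> max by fastforce
  then obtain i where i: "i \<in> {1..n}" "x i = m"
    and minority: "(\<Sum>j\<in>{j\<in>{1..n}. x j = m}. W i j) \<le> 1/2"
    using exists_node_with_minority_level[OF cohesion xI _ \<open>jm \<in> {1..n}\<close> \<open>x jm = m\<close>] by auto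
  have "m - 1 \<in> P_set n W {a..b} \<theta> x i"
    using social_cost_step_down_from_max[OF rs i(1) max minority] xO[rule_format, OF i(1)] i
      \<open>\<theta> < m\<close> \<open>\<theta> \<in> {a..b}\<close>
    by (auto simp: mem_P_set_iff)
  then show ?thesis
    using i \<open>\<theta> < m\<close> by force
qed

lemma exists_improving_move:
  assumes rs: "row_stochastic n W"
    and cohesion: "\<forall>S. S \<noteq> {} \<longrightarrow> strictly_cohesive n W S \<longrightarrow> S \<inter> I \<noteq> {}"
    and "\<theta> \<in> {a..b}" and xO: "\<forall>j\<in>{1..n}. x j \<in> {a..b}" and xI: "\<forall>j\<in>I. x j = \<theta>"
    and "j0 \<in> {1..n}" and "x j0 \<noteq> \<theta>"
  shows "\<exists>i\<in>{1..n}. \<exists>z\<in>P_set n W {a..b} \<theta> x i. \<bar>z - \<theta>\<bar> < \<bar>x i - \<theta>\<bar>"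
proof (cases "\<theta> < x j0")
  case True
  then show ?thesis
    by (rule exists_improving_move_from_above[OF assms(1-6)])
next
  case False
  txt \<open>Reflecting all opinions through 0 turns an opinion below \<open>\<theta>\<close> into one above it.\<close>
  then have "- \<theta> < - x j0"
    using \<open>x j0 \<noteq> \<theta>\<close> by simp
  have "\<exists>i\<in>{1..n}. \<exists>z\<in>P_set n W {- b..- a} (- \<theta>) (\<lambda>j. - x j) i. \<bar>z - - \<theta>\<bar> < \<bar>- x i - - \<theta>\<bar>"
    by (rule exists_improving_move_from_above[where x = "\<lambda>j. - x j",
          OF rs cohesion _ _ _ \<open>j0 \<in> {1..n}\<close> \<open>- \<theta> < - x j0\<close>])
      (use \<open>\<theta> \<in> {a..b}\<close> xO xI in auto)
  then obtain i z where i: "i \<in> {1..n}" and z: "z \<in> P_set n W {- b..- a} (- \<theta>) (\<lambda>j. - x j) i"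
    and closer: "\<bar>z - - \<theta>\<bar> < \<bar>- x i - - \<theta>\<bar>"
    by blast
  have "- z \<in> P_set n W {a..b} \<theta> x i"
    using z P_set_uminus[of "- z"] by simp
  moreover have "\<bar>- z - \<theta>\<bar> < \<bar>x i - \<theta>\<bar>"
    using closer by arith
  ultimately show ?thesis
    using i by blast
qed

lemma P_set_frozen_on_cohesive_block:
  assumes rs: "row_stochastic n W" and cohesive: "strictly_cohesive n W S" and i: "i \<in> {1..n}"
    and "\<forall>j\<in>S. x j = a" and "\<forall>j\<in>{1..n} - S. x j = \<theta>"
  shows "P_set n W Opn \<theta> x i \<subseteq> {x i}"
proof
  fix z
  assume z: "z \<in> P_set n W Opn \<theta> x i"
  show "z \<in> {x i}"
  proof (cases "i \<in> S")
    case True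
    have "S \<subseteq> {1..n}" and "(\<Sum>j\<in>S. W i j) > 1/2"
      using cohesive True by (auto simp: strictly_cohesive_def)
    then have "social_cost n W i a x < social_cost n W i z x" if "z \<noteq> a"
      using social_cost_less_at_majority_value[OF rs i] that assms(4) by blast
    then show ?thesis
      using z True assms(4) by (force simp: mem_P_set_iff)
  next
    case False
    then show ?thesis
      using z i assms(5) by (simp add: mem_P_set_iff)
  qed
qed

lemma frozen_profile_of_cohesive_set:
  assumes "n \<ge> 1" and rs: "row_stochastic n W" and "s \<ge> 1" and "\<theta> \<in> {k..k + int s}"
    and valid: "valid_selection n W {k..k + int s} \<theta> q"
    and "S \<noteq> {}" and cohesive: "strictly_cohesive n W S" and "S \<inter> I = {}"
  obtains x0 where "\<forall>j\<in>{1..n}. x0 j \<in> {k..k + int s}" "\<forall>i\<in>I. x0 i = \<theta>"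
    "\<exists>j\<in>{1..n}. x0 j \<noteq> \<theta>" "pid_kernel n q x0 = return_pmf x0"
proof -
  define a where "a = (if \<theta> = k then k + 1 else k)"
  have a: "a \<in> {k..k + int s}" "a \<noteq> \<theta>"
    using assms(3,4) unfolding a_def by auto
  define x0 where "x0 j = (if j \<in> S then a else \<theta>)" for j
  have x0O: "\<forall>j\<in>{1..n}. x0 j \<in> {k..k + int s}"
    using a assms(4) by (simp add: x0_def)
  have "pid_kernel n q x0 = return_pmf x0"
  proof (rule pid_kernel_eq_return_pmf[OF \<open>n \<ge> 1\<close>], intro ballI)
    fix i
    assume i: "i \<in> {1..n}"
    then have "set_pmf (q x0 i) = P_set n W {k..k + int s} \<theta> x0 i"
      using valid x0O by (simp add: valid_selection_def)
    also have "\<dots> \<subseteq> {x0 i}"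
      by (rule P_set_frozen_on_cohesive_block[OF rs cohesive i, where a = a]) (simp_all add: x0_def)
    finally show "set_pmf (q x0 i) \<subseteq> {x0 i}" .
  qed
  moreover have "\<exists>j\<in>{1..n}. x0 j \<noteq> \<theta>"
  proof -
    obtain j where "j \<in> S"
      using \<open>S \<noteq> {}\<close> by blast
    moreover have "S \<subseteq> {1..n}"
      using cohesive by (simp add: strictly_cohesive_def)
    ultimately show ?thesis
      using a(2) by (auto simp: x0_def)
  qed
  moreover have "\<forall>i\<in>I. x0 i = \<theta>"
    using \<open>S \<inter> I = {}\<close> by (auto simp: x0_def)
  ultimately show ?thesis
    using that x0O by blast
qed

lemma finite_funs_agreeing_outside:
  assumes "finite A" and "finite B"
  shows "finite {x. (\<forall>j\<in>A. x j \<in> B) \<and> (\<forall>j. j \<notin> A \<longrightarrow> x j = y j)}"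
proof -
  let ?extend = "\<lambda>f j. if j \<in> A then f j else y j"
  have "{x. (\<forall>j\<in>A. x j \<in> B) \<and> (\<forall>j. j \<notin> A \<longrightarrow> x j = y j)} \<subseteq> ?extend ` (A \<rightarrow>\<^sub>E B)"
  proof
    fix x
    assume x: "x \<in> {x. (\<forall>j\<in>A. x j \<in> B) \<and> (\<forall>j. j \<notin> A \<longrightarrow> x j = y j)}"
    then have "x = ?extend (restrict x A)"
      by (auto simp: fun_eq_iff)
    moreover have "restrict x A \<in> A \<rightarrow>\<^sub>E B"
      using x by auto
    ultimately show "x \<in> ?extend ` (A \<rightarrow>\<^sub>E B)"
      by (rule image_eqI)
  qed
  moreover have "finite (?extend ` (A \<rightarrow>\<^sub>E B))"
    using assms by (intro finite_imageI finite_PiE)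
  ultimately show ?thesis
    by (rule finite_subset)
qed

text \<open>Outside the nodes \<open>1..n\<close> the profiles agree with \<open>x0\<close>; this keeps the set finite and is
  preserved by the dynamics, which only updates nodes in \<open>1..n\<close>.\<close>

definition admissible_profiles :: "nat \<Rightarrow> int set \<Rightarrow> int \<Rightarrow> nat set \<Rightarrow> profile \<Rightarrow> profile set" where
  "admissible_profiles n Opn \<theta> I x0 =
     {x. (\<forall>j\<in>{1..n}. x j \<in> Opn) \<and> (\<forall>j. j \<notin> {1..n} \<longrightarrow> x j = x0 j) \<and> (\<forall>j\<in>I. x j = \<theta>)}"

definition consensus :: "nat \<Rightarrow> int \<Rightarrow> profile set" where
  "consensus n \<theta> = {x. \<forall>j\<in>{1..n}. x j = \<theta>}"

definition distance_to_truth :: "nat \<Rightarrow> int \<Rightarrow> profile \<Rightarrow> nat" where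
  "distance_to_truth n \<theta> x = (\<Sum>j=1..n. nat \<bar>x j - \<theta>\<bar>)"

lemma finite_admissible_profiles:
  "finite Opn \<Longrightarrow> finite (admissible_profiles n Opn \<theta> I x0)"
  unfolding admissible_profiles_def
  by (rule finite_subset[OF _ finite_funs_agreeing_outside[of "{1..n}" Opn x0]]) auto

lemma pid_kernel_admissible_closed:
  assumes "n \<ge> 1" and valid: "valid_selection n W Opn \<theta> q"
    and x: "x \<in> admissible_profiles n Opn \<theta> I x0"
  shows "set_pmf (pid_kernel n q x) \<subseteq> admissible_profiles n Opn \<theta> I x0"
proof
  fix y
  assume y: "y \<in> set_pmf (pid_kernel n q x)"
  have "\<forall>j\<in>{1..n}. x j \<in> Opn"
    using x by (simp add: admissible_profiles_def)
  then obtain i z where i: "i \<in> {1..n}" and z: "z \<in> P_set n W Opn \<theta> x i" and y_eq: "y = x(i := z)"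
    using set_pid_kernelE[OF \<open>n \<ge> 1\<close> valid _ y] by blast
  have "z \<in> Opn" and "x i = \<theta> \<Longrightarrow> z = \<theta>"
    using z by (auto simp: mem_P_set_iff)
  then show "y \<in> admissible_profiles n Opn \<theta> I x0"
    using x i unfolding admissible_profiles_def y_eq by auto
qed

lemma pid_kernel_consensus_absorbing:
  assumes "n \<ge> 1" and valid: "valid_selection n W Opn \<theta> q"
    and "\<forall>j\<in>{1..n}. x j \<in> Opn" and x: "x \<in> consensus n \<theta>"
  shows "set_pmf (pid_kernel n q x) \<subseteq> consensus n \<theta>"
proof
  fix y
  assume y: "y \<in> set_pmf (pid_kernel n q x)"
  obtain i z where i: "i \<in> {1..n}" and z: "z \<in> P_set n W Opn \<theta> x i" and y_eq: "y = x(i := z)"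
    using set_pid_kernelE[OF \<open>n \<ge> 1\<close> valid assms(3) y] by blast
  have "x i = \<theta>"
    using x i by (simp add: consensus_def)
  then have "z = \<theta>"
    using z by (simp add: mem_P_set_iff)
  then show "y \<in> consensus n \<theta>"
    using x unfolding consensus_def y_eq by simp
qed

lemma pid_kernel_descent:
  assumes "n \<ge> 1" and rs: "row_stochastic n W" and "\<theta> \<in> {a..b}"
    and valid: "valid_selection n W {a..b} \<theta> q"
    and cohesion: "\<forall>S. S \<noteq> {} \<longrightarrow> strictly_cohesive n W S \<longrightarrow> S \<inter> I \<noteq> {}"
    and xO: "\<forall>j\<in>{1..n}. x j \<in> {a..b}" and xI: "\<forall>j\<in>I. x j = \<theta>" and "x \<notin> consensus n \<theta>"
  shows "\<exists>y\<in>set_pmf (pid_kernel n q x). distance_to_truth n \<theta> y < distance_to_truth n \<theta> x"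
proof -
  obtain j0 where "j0 \<in> {1..n}" "x j0 \<noteq> \<theta>"
    using \<open>x \<notin> consensus n \<theta>\<close> by (auto simp: consensus_def)
  then obtain i z where i: "i \<in> {1..n}" and z: "z \<in> P_set n W {a..b} \<theta> x i"
    and closer: "\<bar>z - \<theta>\<bar> < \<bar>x i - \<theta>\<bar>"
    using exists_improving_move[OF rs cohesion \<open>\<theta> \<in> {a..b}\<close> xO xI] by blast
  have "z \<in> set_pmf (q x i)"
    using valid xO i z by (simp add: valid_selection_def)
  then have "x(i := z) \<in> set_pmf (pid_kernel n q x)"
    unfolding set_pid_kernel[OF \<open>n \<ge> 1\<close>] using i by blast
  moreover have "distance_to_truth n \<theta> (x(i := z)) < distance_to_truth n \<theta> x"
    unfolding distance_to_truth_def using i closer by (intro sum_strict_mono_ex1) auto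
  ultimately show ?thesis
    by blast
qed

lemma pid_AE_eventually_consensus:
  assumes "n \<ge> 1" and rs: "row_stochastic n W" and "\<theta> \<in> {a..b}"
    and valid: "valid_selection n W {a..b} \<theta> q"
    and cohesion: "\<forall>S. S \<noteq> {} \<longrightarrow> strictly_cohesive n W S \<longrightarrow> S \<inter> I \<noteq> {}"
    and "\<forall>j\<in>{1..n}. x0 j \<in> {a..b}" and "\<forall>i\<in>I. x0 i = \<theta>"
    and "markov_chain_process M X x0 (pid_kernel n q)"
  shows "AE \<omega> in M. \<exists>T. \<forall>t\<ge>T. \<forall>j\<in>{1..n}. X t \<omega> j = \<theta>"
proof -
  interpret markov_chain M X x0 "pid_kernel n q"
    by (rule markov_chain.intro) fact
  let ?R = "admissible_profiles n {a..b} \<theta> I x0"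
  have "AE \<omega> in M. \<exists>T. \<forall>t\<ge>T. X t \<omega> \<in> consensus n \<theta>"
  proof (rule AE_eventually_absorbed)
    show "finite ?R"
      by (simp add: finite_admissible_profiles)
    show "\<forall>x\<in>?R. set_pmf (pid_kernel n q x) \<subseteq> ?R"
      using pid_kernel_admissible_closed[OF \<open>n \<ge> 1\<close> valid] by blast
    show "x0 \<in> ?R"
      using assms(6,7) by (simp add: admissible_profiles_def)
    show "\<forall>x\<in>?R \<inter> consensus n \<theta>. set_pmf (pid_kernel n q x) \<subseteq> consensus n \<theta>"
      using pid_kernel_consensus_absorbing[OF \<open>n \<ge> 1\<close> valid] by (simp add: admissible_profiles_def)
    show "\<forall>x\<in>?R - consensus n \<theta>. \<exists>y\<in>set_pmf (pid_kernel n q x).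
        distance_to_truth n \<theta> y < distance_to_truth n \<theta> x"
      using pid_kernel_descent[OF assms(1-5)] by (simp add: admissible_profiles_def)
  qed
  then show ?thesis
    by (simp add: consensus_def)
qed

theorem theorem6:
  fixes n :: nat and W :: "nat \<Rightarrow> nat \<Rightarrow> real" and k :: int and s :: nat
    and \<theta> :: int and I :: "nat set" and q :: "profile \<Rightarrow> nat \<Rightarrow> int pmf"
  assumes "n \<ge> 1"
    and "row_stochastic n W"
    and "s \<ge> 1"
    and "\<theta> \<in> {k..k + int s}"
    and "I \<subseteq> {1..n}"
    and "valid_selection n W {k..k + int s} \<theta> q"
  shows "(\<forall>x0. (\<forall>j\<in>{1..n}. x0 j \<in> {k..k + int s}) \<longrightarrow> (\<forall>i\<in>I. x0 i = \<theta>) \<longrightarrow>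
            (\<forall>(M :: (nat \<Rightarrow> profile) measure) X.
               markov_chain_process M X x0 (pid_kernel n q) \<longrightarrow>
               (AE \<omega> in M. \<exists>T. \<forall>t\<ge>T. \<forall>j\<in>{1..n}. X t \<omega> j = \<theta>)))
         \<longleftrightarrow> (\<forall>S. S \<noteq> {} \<longrightarrow> strictly_cohesive n W S \<longrightarrow> S \<inter> I \<noteq> {})"
proof -
  let "?converges \<longleftrightarrow> ?cohesive_sets_meet_I" = ?thesis
  show ?thesis
  proof
    assume converges: ?converges
    show ?cohesive_sets_meet_I
    proof (intro allI impI notI)
      fix S
      assume "S \<noteq> {}" "strictly_cohesive n W S" "S \<inter> I = {}"
      then obtain x0 where x0: "\<forall>j\<in>{1..n}. x0 j \<in> {k..k + int s}" "\<forall>i\<in>I. x0 i = \<theta>"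
        and moved: "\<exists>j\<in>{1..n}. x0 j \<noteq> \<theta>" and frozen: "pid_kernel n q x0 = return_pmf x0"
        by (rule frozen_profile_of_cohesive_set[OF assms(1-4,6)])
      let ?M = "measure_pmf (return_pmf (\<lambda>_ :: nat. x0))"
      have stationary: "markov_chain_process ?M (\<lambda>_ _. x0) x0 (pid_kernel n q)"
        using frozen by (intro markov_chain_process_stationary prob_space_measure_pmf)
      have "\<forall>(M :: (nat \<Rightarrow> profile) measure) X. markov_chain_process M X x0 (pid_kernel n q) \<longrightarrow>
          (AE \<omega> in M. \<exists>T. \<forall>t\<ge>T. \<forall>j\<in>{1..n}. X t \<omega> j = \<theta>)"
        using converges x0 by blast
      from this[rule_format, OF stationary] show False
        using moved by (simp add: AE_measure_pmf_iff) (meson order_refl)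
    qed
  next
    assume ?cohesive_sets_meet_I
    then show ?converges
      by (intro allI impI) (rule pid_AE_eventually_consensus[OF assms(1,2,4,6)])
  qed
qed

end
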